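(* Let $(\sigma,(\mu^B_m))$ be an equilibrium of the disclosure game described in the context. Then there exists $q^*\in Q$ such that $q^B_x=q^*$ for almost every $x\in X$ with $\sigma(x)=\varnothing$.
   Context: Let $0<q_\ell<q_h<\infty$, $Q=[q_\ell,q_h]$, and let $c$ be a real number with $0<c<q_\ell$. Let $F$ be a probability distribution on $[0,1]$ with support $[0,1]$ admitting a twice continuously differentiable density $f:(0,1)\to\mathbb{R}_{>0}$. Define $r(v)=(1-F(v))/f(v)$ and $\psi(v)=v-r(v)$ on $(0,1)$, and assume $\psi'(v)>0$ whenever $\psi(v)>0$. For $q\in Q$, $p(q)$ is the unique maximizer over $p\in\mathbb{R}$ of $(p-c)\big(1-F(p/q)\big)$, and let $R(q)=(p(q)-c)\big(1-F(p(q)/q)\big)$. The quality $q$ is drawn from a prior $\mu\in\Delta(Q)$ with support $Q$. Seller's information structure $(X,\pi^S)$ consists of a measurable signal space $X$ with $\varnothing\notin X$ and $\pi^S:Q\to\Delta(X)$; on observing $x$, Seller forms the Bayesian posterior $\mu^S_x$; "almost every $x$" refers to the marginal distribution of the signal. A disclosure strategy is a measurable $\sigma:X\to X\cup\{\varnothing\}$ with $\sigma(x)\in\{x,\varnothing\}$ for all $x$. Buyer's beliefs are $(\mu^B_m)_{m\in X\cup\{\varnothing\}}$ with posterior means $q^B_m=\mathbb{E}_{\mu^B_m}[q]$. A pair $(\sigma,(\mu^B_m))$ is an equilibrium if (i) for every $x\in X$, $\sigma(x)\in\arg\max_{m\in\{x,\varnothing\}} R(q^B_m)$; and (ii) $\mu^B_m=\mu^S_m$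 for $m\in X$, and $\mu^B_\varnothing=\mathbb{E}[\mu^S_x\mid\sigma(x)=\varnothing]$ when this conditional expectation is well defined (otherwise $\mu^B_\varnothing$ is arbitrary). *)

theory Defs
  imports "HOL-Probability.Probability"
begin

definition virt_value :: "(real \<Rightarrow> real) \<Rightarrow> (real \<Rightarrow> real) \<Rightarrow> real \<Rightarrow> real" where
  "virt_value F f v = v - (1 - F v) / f v"

definition profit :: "real \<Rightarrow> (real \<Rightarrow> real) \<Rightarrow> real \<Rightarrow> real \<Rightarrow> real" where
  "profit c F q p = (p - c) * (1 - F (p / q))"

text \<open>p(q): the (unique) maximiser over all real prices.\<close>
definition opt_price :: "real \<Rightarrow> (real \<Rightarrow> real) \<Rightarrow> real \<Rightarrow> real" where
  "opt_price c F q = (THE p. \<forall>p'. profit c F q p' \<le> profit c F q p)"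

definition Rev :: "real \<Rightarrow> (real \<Rightarrow> real) \<Rightarrow> real \<Rightarrow> real" where
  "Rev c F q = profit c F q (opt_price c F q)"

definition has_support :: "real measure \<Rightarrow> real set \<Rightarrow> bool" where
  "has_support M S \<longleftrightarrow> emeasure M S = 1 \<and> (\<forall>q\<in>S. \<forall>e>0. emeasure M (S \<inter> ball q e) > 0)"

text \<open>Signal marginal and Bayesian posterior (regular conditional distribution of q given x).\<close>
definition signal_marginal :: "real measure \<Rightarrow> (real \<Rightarrow> 'x measure) \<Rightarrow> 'x measure" where
  "signal_marginal \<mu> \<pi> = bind \<mu> \<pi>"

definition bayes_posterior ::
  "real set \<Rightarrow> 'x measure \<Rightarrow> real measure \<Rightarrow> (real \<Rightarrow> 'x measure) \<Rightarrow> ('x \<Rightarrow> real measure) \<Rightarrow> bool" where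
  "bayes_posterior Q Xs \<mu> \<pi> post \<longleftrightarrow>
     post \<in> measurable Xs (prob_algebra (restrict_space borel Q)) \<and>
     (\<forall>A \<in> sets (restrict_space borel Q). \<forall>B \<in> sets Xs.
        (\<integral>\<^sup>+ q. indicator A q * emeasure (\<pi> q) B \<partial>\<mu>)
        = (\<integral>\<^sup>+ x. indicator B x * emeasure (post x) A \<partial>signal_marginal \<mu> \<pi>))"

definition post_mean :: "real measure \<Rightarrow> real" where
  "post_mean M = (\<integral> q. q \<partial>M)"

text \<open>Equilibrium of the disclosure game.  Messages are 'x option, None = the empty message.\<close>
definition equilibrium ::
  "real \<Rightarrow> (real \<Rightarrow> real) \<Rightarrow> real set \<Rightarrow> 'x measure \<Rightarrow> real measure \<Rightarrow> (real \<Rightarrow> 'x measure)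
   \<Rightarrow> ('x \<Rightarrow> real measure) \<Rightarrow> ('x \<Rightarrow> 'x option) \<Rightarrow> ('x option \<Rightarrow> real measure) \<Rightarrow> bool" where
  "equilibrium c F Q Xs \<mu> \<pi> post \<sigma> \<mu>B \<longleftrightarrow>
     \<comment> \<open>(i) optimality of disclosure for every signal\<close>
     (\<forall>x\<in>space Xs. Rev c F (post_mean (\<mu>B (\<sigma> x))) \<ge> Rev c F (post_mean (\<mu>B (Some x)))
                  \<and> Rev c F (post_mean (\<mu>B (\<sigma> x))) \<ge> Rev c F (post_mean (\<mu>B None))) \<and>
     \<comment> \<open>(ii) consistency of beliefs\<close>
     (\<forall>x\<in>space Xs. \<mu>B (Some x) = post x) \<and>
     (emeasure (signal_marginal \<mu> \<pi>) {x\<in>space Xs. \<sigma> x = None} > 0 \<longrightarrow>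
        \<mu>B None = bind (uniform_measure (signal_marginal \<mu> \<pi>) {x\<in>space Xs. \<sigma> x = None}) post)"

end

theory Submission
  imports Defs
begin

text \<open>Because the virtual value \<open>\<psi>\<close> increases wherever it is positive, the monopoly price
  \<open>p(q)\<close> is the unique solution of \<open>\<psi>(p/q) = c/q\<close>, and \<open>R\<close> is strictly increasing above \<open>c\<close>:
  the optimal price at a lower quality earns strictly more at a higher one. So in equilibrium no
  withheld signal has a posterior mean above \<open>q*\<close>, the mean after the empty message, since
  disclosing it would pay strictly more. By consistency of beliefs \<open>q*\<close> is the average of these
  posterior means over the withheld signals, so they all equal \<open>q*\<close> almost surely.\<close>

locale cdf_of_density =
  fixes F f :: "real \<Rightarrow> real"
  assumes density_pos: "\<And>v. v \<in> {0<..<1} \<Longrightarrow> f v > 0"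
    and density_continuous: "continuous_on {0<..<1} f"
    and density_integral: "(f has_integral 1) {0..1}"
    and cdf_eq_integral: "\<And>v. F v = integral {0..max 0 (min v 1)} f"
begin

lemma cdf_eq_0: "v \<le> 0 \<Longrightarrow> F v = 0"
  by (simp add: cdf_eq_integral)

lemma cdf_eq_1: "1 \<le> v \<Longrightarrow> F v = 1"
  using density_integral by (simp add: cdf_eq_integral integral_unique)

lemma cdf_eq_indefinite_integral: "v \<in> {0..1} \<Longrightarrow> F v = integral {0..v} f"
  by (simp add: cdf_eq_integral)

lemma cdf_has_real_derivative:
  assumes v: "v \<in> {0<..<1}"
  shows "(F has_real_derivative f v) (at v)"
proof -
  have "continuous (at v within {0..1}) f"
    using density_continuous v
    by (simp add: continuous_on_eq_continuous_at continuous_at_imp_continuous_at_within)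
  then have "((\<lambda>u. integral {0..u} f) has_real_derivative f v) (at v)"
    using integral_has_vector_derivative_continuous_at[of f 0 1 v "{}"] density_integral v
      at_within_interior[of v "{0..1::real}"]
    by (auto simp: has_real_derivative_iff_has_vector_derivative has_integral_integrable)
  then show ?thesis
    by (rule has_field_derivative_transform_within_open[where S="{0<..<1}"])
      (use v cdf_eq_indefinite_integral in auto)
qed

lemma continuous_on_cdf: "continuous_on {0..1} F"
  using indefinite_integral_continuous_1[OF has_integral_integrable[OF density_integral]]
  by (rule continuous_on_eq) (simp add: cdf_eq_indefinite_integral)

lemma cdf_strict_mono:
  assumes ab: "0 \<le> a" "a < b" "b \<le> 1"
  shows "F a < F b"
proof -
  have "continuous_on {a..b} F"
    using ab by (intro continuous_on_subset[OF continuous_on_cdf]) auto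
  moreover have "F differentiable (at x)" if "a < x" "x < b" for x
    using cdf_has_real_derivative[of x] that ab real_differentiable_def by force
  ultimately obtain l z where z: "a < z" "z < b" "(F has_real_derivative l) (at z)"
    and mvt: "F b - F a = (b - a) * l"
    using MVT[OF ab(2)] by blast
  have "l = f z"
    using DERIV_unique[OF z(3) cdf_has_real_derivative[of z]] z ab by simp
  moreover have "0 < (b - a) * f z"
    using density_pos[of z] z ab by simp
  ultimately show ?thesis
    using mvt by simp
qed

lemma cdf_less_1: "v < 1 \<Longrightarrow> F v < 1"
  using cdf_eq_0[of v] cdf_strict_mono[of v 1] cdf_eq_1[of 1] by (cases "v \<le> 0") auto

lemma cdf_le_1: "F v \<le> 1"
  using cdf_less_1[of v] cdf_eq_1[of v] by (cases "v < 1") auto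

end

lemma inj_on_pos_if_deriv_pos:
  fixes g :: "real \<Rightarrow> real"
  assumes diff: "\<And>v. v \<in> {a<..<b} \<Longrightarrow> g differentiable (at v)"
    and deriv_pos: "\<And>v. v \<in> {a<..<b} \<Longrightarrow> g v > 0 \<Longrightarrow> deriv g v > 0"
  shows "inj_on g {v \<in> {a<..<b}. g v > 0}"
proof -
  have ne: "g v1 \<noteq> g v2" if v: "a < v1" "v1 < v2" "v2 < b" and pos: "g v1 > 0" for v1 v2
  proof
    assume eq: "g v1 = g v2"
    have dg: "(g has_real_derivative deriv g v) (at v)" if "v \<in> {a<..<b}" for v
      using diff[OF that] DERIV_deriv_iff_real_differentiable by blast
    have "continuous_on {v1..v2} g"
      using v by (intro continuous_at_imp_continuous_on ballI DERIV_isCont[OF dg]) auto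
    then obtain u where u: "u \<in> {v1..v2}" and u_max: "\<forall>y\<in>{v1..v2}. g y \<le> g u"
      using continuous_attains_sup[OF compact_Icc, of v1 v2 g] v by auto
    obtain d where d: "d > 0" and inc: "\<forall>h>0. h < d \<longrightarrow> g v1 < g (v1 + h)"
      using DERIV_pos_inc_right[OF dg[of v1]] deriv_pos[of v1] v pos by auto
    \<comment> \<open>g rises right after v1, so its maximum on [v1, v2] exceeds g v1 = g v2 and is interior\<close>
    define h where "h = min (d/2) ((v2 - v1)/2)"
    have h: "0 < h" "h < d" "v1 + h \<le> v2"
      using d v min.cobounded1[of "d/2" "(v2 - v1)/2"] min.cobounded2[of "d/2" "(v2 - v1)/2"]
      unfolding h_def by auto
    have "g v1 < g (v1 + h)"
      using inc h by simp
    also have "\<dots> \<le> g u"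
      using u_max h by simp
    finally have gu: "g v1 < g u" .
    then have u_int: "v1 < u" "u < v2"
      using u eq by (auto simp: less_le)
    have "deriv g u = 0"
    proof (rule DERIV_local_max[OF dg])
      show "u \<in> {a<..<b}" using u_int v by simp
      show "0 < min (u - v1) (v2 - u)" using u_int by simp
      show "\<forall>y. \<bar>u - y\<bar> < min (u - v1) (v2 - u) \<longrightarrow> g y \<le> g u"
        using u_max by (auto simp: abs_if split: if_splits)
    qed
    moreover have "deriv g u > 0"
      using deriv_pos[of u] u_int v gu pos by simp
    ultimately show False by simp
  qed
  show ?thesis
  proof (rule inj_onI, rule ccontr)
    fix v1 v2 assume "v1 \<in> {v \<in> {a<..<b}. g v > 0}" "v2 \<in> {v \<in> {a<..<b}. g v > 0}"
      and "g v1 = g v2" "v1 \<noteq> v2"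
    then show False
      using ne[of v1 v2] ne[of v2 v1] by (cases "v1 < v2") auto
  qed
qed

locale monopoly_pricing = cdf_of_density +
  fixes c :: real
  assumes cost_pos: "0 < c"
    and density_differentiable: "\<And>v. v \<in> {0<..<1} \<Longrightarrow> f differentiable (at v)"
    and virt_value_deriv_pos:
      "\<And>v. v \<in> {0<..<1} \<Longrightarrow> virt_value F f v > 0 \<Longrightarrow> deriv (virt_value F f) v > 0"
begin

lemma virt_value_inj_on: "inj_on (virt_value F f) {v \<in> {0<..<1}. virt_value F f v > 0}"
proof (rule inj_on_pos_if_deriv_pos[OF _ virt_value_deriv_pos])
  fix v :: real
  assume v: "v \<in> {0<..<1}"
  then have "F differentiable (at v)"
    using cdf_has_real_derivative real_differentiable_def by blast
  then show "virt_value F f differentiable (at v)"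
    unfolding virt_value_def[abs_def] using density_differentiable[OF v] density_pos[OF v]
    by (intro differentiable_diff differentiable_divide differentiable_ident differentiable_const) auto
qed

lemma profit_pos:
  assumes "c < p" "p < q"
  shows "profit c F q p > 0"
  using assms cdf_less_1[of "p / q"] cost_pos by (simp add: profit_def)

lemma profit_nonpos:
  assumes "0 < q" "p \<le> c \<or> q \<le> p"
  shows "profit c F q p \<le> 0"
  using assms cdf_eq_1[of "p / q"] cdf_le_1[of "p / q"]
  by (auto simp: profit_def mult_nonpos_nonneg)

lemma continuous_on_profit:
  assumes "c \<le> q"
  shows "continuous_on {c..q} (profit c F q)"
proof -
  have "continuous_on {c..q} (\<lambda>p. F (p / q))"
    using assms cost_pos
    by (intro continuous_on_compose2[OF continuous_on_cdf]) (auto intro!: continuous_intros)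
  then show ?thesis
    unfolding profit_def[abs_def] by (intro continuous_intros)
qed

lemma profit_has_real_derivative:
  assumes "c < p" "p < q"
  shows "(profit c F q has_real_derivative (1 - F (p / q)) - f (p / q) / q * (p - c)) (at p)"
proof -
  have "p / q \<in> {0<..<1}"
    using assms cost_pos by simp
  then have "((\<lambda>p. F (p / q)) has_real_derivative f (p / q) / q) (at p)"
    using DERIV_chain2[OF cdf_has_real_derivative DERIV_cdivide[OF DERIV_ident, of q]] by simp
  then have "((\<lambda>p. (p - c) * (1 - F (p / q))) has_real_derivative
      (1 - 0) * (1 - F (p / q)) + (0 - f (p / q) / q) * (p - c)) (at p)"
    by (intro DERIV_mult DERIV_diff DERIV_ident DERIV_const)
  then show ?thesis
    unfolding profit_def[abs_def] by simp
qed

lemma profit_maximizer_bounds: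
  assumes "c < q" and max: "\<forall>p'. profit c F q p' \<le> profit c F q p"
  shows "c < p" "p < q"
proof -
  have "0 < profit c F q ((c + q) / 2)"
    using assms by (intro profit_pos) auto
  then have "0 < profit c F q p"
    using max by (meson less_le_trans)
  moreover have "0 < q"
    using assms cost_pos by simp
  ultimately show "c < p" "p < q"
    using profit_nonpos[of q p] by (meson not_le)+
qed

lemma profit_maximizer_virt_value:
  assumes "c < q" and max: "\<forall>p'. profit c F q p' \<le> profit c F q p"
  shows "virt_value F f (p / q) = c / q"
proof -
  have p: "c < p" "p < q"
    using profit_maximizer_bounds[OF assms] by auto
  then have v: "p / q \<in> {0<..<1}"
    using cost_pos by simp
  have "(1 - F (p / q)) - f (p / q) / q * (p - c) = 0"
    by (rule DERIV_local_max[OF profit_has_real_derivative[OF p], of 1]) (use max in auto)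
  then have "(1 - F (p / q)) / f (p / q) = p / q - c / q"
    using density_pos[OF v] p cost_pos by (simp add: field_simps)
  then show ?thesis
    by (simp add: virt_value_def)
qed

lemma profit_maximizer_exists:
  assumes "c < q"
  shows "\<exists>p. \<forall>p'. profit c F q p' \<le> profit c F q p"
proof -
  obtain p where p: "p \<in> {c..q}" and max: "\<forall>p'\<in>{c..q}. profit c F q p' \<le> profit c F q p"
    using continuous_attains_sup[OF compact_Icc _ continuous_on_profit, of q] assms by auto
  have "0 < profit c F q ((c + q) / 2)"
    using assms by (intro profit_pos) auto
  also have "\<dots> \<le> profit c F q p"
    using max assms by simp
  finally have "0 < profit c F q p" .
  then have "profit c F q p' \<le> profit c F q p" for p'
    using max profit_nonpos[of q p'] assms cost_pos by (cases "p' \<in> {c..q}") force+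
  then show ?thesis by blast
qed

lemma profit_maximizer_unique:
  assumes "c < q"
    and max1: "\<forall>p'. profit c F q p' \<le> profit c F q p1"
    and max2: "\<forall>p'. profit c F q p' \<le> profit c F q p2"
  shows "p1 = p2"
proof -
  have "p1 / q = p2 / q"
  proof (rule inj_onD[OF virt_value_inj_on])
    show "virt_value F f (p1 / q) = virt_value F f (p2 / q)"
      using profit_maximizer_virt_value[OF assms(1)] max1 max2 by simp
    show "p1 / q \<in> {v \<in> {0<..<1}. virt_value F f v > 0}"
      using profit_maximizer_bounds[OF assms(1) max1] profit_maximizer_virt_value[OF assms(1) max1] cost_pos
      by simp
    show "p2 / q \<in> {v \<in> {0<..<1}. virt_value F f v > 0}"
      using profit_maximizer_bounds[OF assms(1) max2] profit_maximizer_virt_value[OF assms(1) max2] cost_pos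
      by simp
  qed
  then show ?thesis
    using assms(1) cost_pos by simp
qed

lemma opt_price_maximizes:
  assumes "c < q"
  shows "\<forall>p. profit c F q p \<le> profit c F q (opt_price c F q)"
  unfolding opt_price_def
  by (rule theI'[OF ex_ex1I[OF profit_maximizer_exists[OF assms] profit_maximizer_unique[OF assms]]])

lemma Rev_strict_mono:
  assumes "c < a" "a < b"
  shows "Rev c F a < Rev c F b"
proof -
  define p where "p = opt_price c F a"
  have p: "c < p" "p < a"
    using profit_maximizer_bounds[OF assms(1) opt_price_maximizes[OF assms(1)]] by (simp_all add: p_def)
  then have "F (p / b) < F (p / a)"
    using assms cost_pos by (intro cdf_strict_mono) (auto simp: frac_less2)
  then have "profit c F a p < profit c F b p"
    using p by (simp add: profit_def)
  also have "\<dots> \<le> Rev c F b"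
    using opt_price_maximizes[of b] assms by (simp add: Rev_def)
  finally show ?thesis
    by (simp add: Rev_def p_def)
qed

end

lemma
  assumes "prob_space \<mu>" "sets \<mu> = sets S" "\<pi> \<in> S \<rightarrow>\<^sub>M prob_algebra Xs"
  shows prob_space_signal_marginal: "prob_space (signal_marginal \<mu> \<pi>)"
    and sets_signal_marginal: "sets (signal_marginal \<mu> \<pi>) = sets Xs"
proof -
  have "\<mu> \<in> space (prob_algebra S)"
    using assms(1,2) by (simp add: space_prob_algebra)
  then show "prob_space (signal_marginal \<mu> \<pi>)" "sets (signal_marginal \<mu> \<pi>) = sets Xs"
    unfolding signal_marginal_def using prob_space_bind' sets_bind' assms(3) by blast+
qed

lemma post_mean_mem_interval:
  assumes "prob_space P" "sets P = sets (restrict_space borel {a..b})"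
  shows "post_mean P \<in> {a..b}"
proof -
  interpret prob_space P by fact
  have space: "space P = {a..b}"
    using sets_eq_imp_space_eq[OF assms(2)] by simp
  have "(\<lambda>q. q) \<in> borel_measurable P"
    using assms(2) by (simp add: measurable_restrict_space1 cong: measurable_cong_sets)
  then have int: "integrable P (\<lambda>q. q)"
    by (intro integrable_const_bound[where B="max \<bar>a\<bar> \<bar>b\<bar>"]) (auto intro!: AE_I2 simp: space)
  have "a \<le> (\<integral>q. q \<partial>P)" "(\<integral>q. q \<partial>P) \<le> b"
    by (auto intro!: integral_ge_const integral_le_const int AE_I2 simp: space)
  then show ?thesis
    by (simp add: post_mean_def)
qed

lemma borel_measurable_post_mean:
  assumes "K \<in> M \<rightarrow>\<^sub>M prob_algebra (restrict_space borel {a..b})"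
  shows "(\<lambda>x. post_mean (K x)) \<in> borel_measurable M"
  unfolding post_mean_def
  by (rule measurable_compose[OF measurable_prob_algebraD[OF assms] integral_measurable_subprob_algebra])
    (simp add: measurable_restrict_space1)

lemma integrable_post_mean:
  assumes "finite_measure M" "K \<in> M \<rightarrow>\<^sub>M prob_algebra (restrict_space borel {a..b})"
  shows "integrable M (\<lambda>x. post_mean (K x))"
proof (rule finite_measure.integrable_const_bound[where B="max \<bar>a\<bar> \<bar>b\<bar>"])
  show "AE x in M. norm (post_mean (K x)) \<le> max \<bar>a\<bar> \<bar>b\<bar>"
    using measurable_space[OF assms(2)] post_mean_mem_interval
    by (intro AE_I2) (fastforce simp: space_prob_algebra)
qed (use assms borel_measurable_post_mean in auto)

lemma post_mean_bind:
  assumes "prob_space M" "K \<in> M \<rightarrow>\<^sub>M prob_algebra (restrict_space borel {a..b})"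
  shows "post_mean (M \<bind> K) = (\<integral>x. post_mean (K x) \<partial>M)"
  unfolding post_mean_def
proof (rule integral_bind[where K="restrict_space borel {a..b}" and B="max \<bar>a\<bar> \<bar>b\<bar>" and B'=1])
  show "K \<in> M \<rightarrow>\<^sub>M subprob_algebra (restrict_space borel {a..b})"
    by (rule measurable_prob_algebraD[OF assms(2)])
  show "AE x in M. emeasure (K x) (space (K x)) \<le> ennreal 1"
    using measurable_space[OF assms(2)]
    by (intro AE_I2) (auto simp: space_prob_algebra prob_space.emeasure_space_1)
qed (use assms(1) prob_space.finite_measure in \<open>auto simp: measurable_restrict_space1\<close>)

lemma AE_eq_integral_if_AE_le_integral:
  fixes g :: "'a \<Rightarrow> real"
  assumes "prob_space M" "integrable M g" "AE x in M. g x \<le> (\<integral>x. g x \<partial>M)"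
  shows "AE x in M. g x = (\<integral>x. g x \<partial>M)"
proof -
  interpret prob_space M by fact
  let ?m = "\<integral>x. g x \<partial>M"
  have int: "integrable M (\<lambda>x. ?m - g x)"
    using assms(2) by simp
  have "(\<integral>x. ?m - g x \<partial>M) = 0"
    using assms(2) by (simp add: prob_space)
  then have "AE x in M. ?m - g x = 0"
    using integral_nonneg_eq_0_iff_AE[OF int] assms(3) by simp
  then show ?thesis
    by auto
qed

lemma AE_post_mean_eq_pooled_mean:
  assumes M: "prob_space M" and N: "N \<in> sets M" "emeasure M N \<noteq> 0"
    and K: "K \<in> M \<rightarrow>\<^sub>M prob_algebra (restrict_space borel {a..b})"
    and le: "\<And>x. x \<in> N \<Longrightarrow> post_mean (K x) \<le> post_mean (uniform_measure M N \<bind> K)"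
  shows "AE x in M. x \<in> N \<longrightarrow> post_mean (K x) = post_mean (uniform_measure M N \<bind> K)"
proof -
  define U where "U = uniform_measure M N"
  have fin: "emeasure M N < \<infinity>"
    using finite_measure.emeasure_finite[OF prob_space.finite_measure[OF M]] by (simp add: less_top)
  have U: "prob_space U"
    unfolding U_def using N fin by (intro prob_space_uniform_measure) auto
  have KU: "K \<in> U \<rightarrow>\<^sub>M prob_algebra (restrict_space borel {a..b})"
    using K by (simp add: U_def cong: measurable_cong_sets)
  have mean: "post_mean (U \<bind> K) = (\<integral>x. post_mean (K x) \<partial>U)"
    by (rule post_mean_bind[OF U KU])
  have "AE x in U. post_mean (K x) \<le> post_mean (U \<bind> K)"
    unfolding U_def AE_uniform_measure[OF N(2) fin] using le by (intro AE_I2) auto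
  then have "AE x in U. post_mean (K x) = post_mean (U \<bind> K)"
    unfolding mean
    by (intro AE_eq_integral_if_AE_le_integral U integrable_post_mean[OF _ KU] prob_space.finite_measure)
  then show ?thesis
    unfolding U_def AE_uniform_measure[OF N(2) fin] .
qed

lemma (in monopoly_pricing) equilibrium_withheld_post_mean_le:
  assumes eq: "equilibrium c F {a..b} Xs \<mu> \<pi> post \<sigma> \<mu>B" and "c < a"
    and belief: "prob_space (\<mu>B None)" "sets (\<mu>B None) = sets (restrict_space borel {a..b})"
    and x: "x \<in> space Xs" "\<sigma> x = None"
  shows "post_mean (post x) \<le> post_mean (\<mu>B None)"
proof (rule ccontr)
  assume "\<not> post_mean (post x) \<le> post_mean (\<mu>B None)"
  moreover have "c < post_mean (\<mu>B None)"
    using post_mean_mem_interval[OF belief] \<open>c < a\<close> by simp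
  ultimately have "Rev c F (post_mean (\<mu>B None)) < Rev c F (post_mean (post x))"
    by (intro Rev_strict_mono) auto
  moreover have "Rev c F (post_mean (\<mu>B (Some x))) \<le> Rev c F (post_mean (\<mu>B None))"
    and "\<mu>B (Some x) = post x"
    using eq x unfolding equilibrium_def by force+
  ultimately show False
    by simp
qed

theorem lemma15:
  fixes q_l q_h c :: real
    and F f f' f'' :: "real \<Rightarrow> real"
    and \<mu> :: "real measure"
    and Xs :: "'x measure"
    and \<pi> :: "real \<Rightarrow> 'x measure"
    and post :: "'x \<Rightarrow> real measure"
    and \<sigma> :: "'x \<Rightarrow> 'x option"
    and \<mu>B :: "'x option \<Rightarrow> real measure"
  defines "Q \<equiv> {q_l..q_h}"
  assumes Q_pos: "0 < q_l" "q_l < q_h"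
    and c_bounds: "0 < c" "c < q_l"
    and f_pos: "\<forall>v\<in>{0<..<1}. f v > 0"
    and f_deriv: "\<forall>v\<in>{0<..<1}. (f has_real_derivative f' v) (at v)"
    and f'_deriv: "\<forall>v\<in>{0<..<1}. (f' has_real_derivative f'' v) (at v)"
    and f''_cont: "continuous_on {0<..<1} f''"
    and f_density: "(f has_integral 1) {0..1}"
    and F_def: "\<forall>v. F v = integral {0..max 0 (min v 1)} f"
    and psi_mono: "\<forall>v\<in>{0<..<1}. virt_value F f v > 0 \<longrightarrow> deriv (virt_value F f) v > 0"
    and prior: "prob_space \<mu>" "sets \<mu> = sets (restrict_space borel Q)" "has_support \<mu> Q"
    and kernel: "\<pi> \<in> measurable (restrict_space borel Q) (prob_algebra Xs)"
    and posterior: "bayes_posterior Q Xs \<mu> \<pi> post"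
    and sigma_range: "\<forall>x\<in>space Xs. \<sigma> x = Some x \<or> \<sigma> x = None"
    and sigma_meas: "{x\<in>space Xs. \<sigma> x = None} \<in> sets Xs"
    and beliefs: "\<forall>m. prob_space (\<mu>B m) \<and> sets (\<mu>B m) = sets (restrict_space borel Q)"
    and eq: "equilibrium c F Q Xs \<mu> \<pi> post \<sigma> \<mu>B"
  shows "\<exists>qs\<in>Q. AE x in signal_marginal \<mu> \<pi>. \<sigma> x = None \<longrightarrow> post_mean (\<mu>B (Some x)) = qs"
proof -
  interpret monopoly_pricing F f c
  proof
    show "continuous_on {0<..<1} f"
      using f_deriv by (intro continuous_at_imp_continuous_on) (auto dest: DERIV_isCont)
    show "f differentiable (at v)" if "v \<in> {0<..<1}" for v
      using f_deriv that real_differentiable_def by blast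
  qed (use f_pos f_density F_def c_bounds psi_mono in auto)
  define M where "M = signal_marginal \<mu> \<pi>"
  define N where "N = {x\<in>space Xs. \<sigma> x = None}"
  define q0 where "q0 = post_mean (\<mu>B None)"
  have M: "prob_space M" "sets M = sets Xs"
    unfolding M_def
    using prob_space_signal_marginal[OF prior(1,2) kernel] sets_signal_marginal[OF prior(1,2) kernel] .
  have post: "post \<in> M \<rightarrow>\<^sub>M prob_algebra (restrict_space borel {q_l..q_h})"
    using posterior M(2) by (simp add: bayes_posterior_def Q_def cong: measurable_cong_sets)
  have consistent: "\<And>x. x \<in> space Xs \<Longrightarrow> \<mu>B (Some x) = post x"
    and pooled: "emeasure M N > 0 \<Longrightarrow> \<mu>B None = uniform_measure M N \<bind> post"
    using eq unfolding equilibrium_def M_def N_def by blast+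
  have le: "\<And>x. x \<in> N \<Longrightarrow> post_mean (post x) \<le> q0"
    using equilibrium_withheld_post_mean_le[OF eq[unfolded Q_def]] beliefs c_bounds
    by (auto simp: N_def Q_def q0_def)
  have "AE x in M. x \<in> N \<longrightarrow> post_mean (post x) = q0"
  proof (cases "emeasure M N = 0")
    case True
    then show ?thesis
      using M(2) sigma_meas by (intro AE_mp[OF AE_not_in AE_I2]) (auto simp: null_sets_def N_def)
  next
    case False
    then show ?thesis
      using AE_post_mean_eq_pooled_mean[OF M(1) _ False post] le pooled M(2) sigma_meas
      by (simp add: N_def q0_def zero_less_iff_neq_zero)
  qed
  then have "AE x in M. \<sigma> x = None \<longrightarrow> post_mean (\<mu>B (Some x)) = q0"
    by (rule AE_mp) (intro AE_I2, auto simp: N_def consistent sets_eq_imp_space_eq[OF M(2)])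
  moreover have "q0 \<in> Q"
    using beliefs post_mean_mem_interval unfolding q0_def Q_def by blast
  ultimately show ?thesis
    unfolding M_def by blast
qed

end
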